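(* Let $(X,\rho)$ be a symmetric rack and $A=\{A_x\mid x\in X\}$ a family of abelian groups. Suppose given group isomorphisms $\phi_{x,y}:A_x\to A_{x*y}$, group homomorphisms $\psi_{x,y}:A_y\to A_{x*y}$ and $\eta_x:A_x\to A_{\rho(x)}$, and a map $\sigma$ assigning to each $(x,y)\in X\times X$ an element $\sigma_{x,y}\in A_{x*y}$. Define $\alpha_{x,y}:A_x\times A_y\to A_{x*y}$ and $\beta_x:A_x\to A_{\rho(x)}$ by $$\alpha_{x,y}(a,b)=\phi_{x,y}(a)+\psi_{x,y}(b)+\sigma_{x,y},\qquad \beta_x(a)=\eta_x(a).$$ Then: (A) $(\alpha,\beta)$ is a dynamical cocycle for the symmetric rack $(X,\rho)$ over $A$ if and only if $(A,\phi,\psi,\eta)$ is an $(X,\rho)$-module and $\sigma$ is a symmetric rack 2-cocycle. If moreover $(X,\rho)$ is a symmetric quandle, then $(\alpha,\beta)$ is a dynamical cocycle for $(X,\rho)$ over $A$ if and only if $(A,\phi,\psi,\eta)$ is an $(X,\rho)$-module (for the symmetric quandle, i.e. including (M9)) and $\sigma$ is a symmetric quandle 2-cocycle. (B) Let $\sigma'$ be another symmetric rack (respectively, quandle) 2-cocycle and $(\alpha',\beta')$ the pair defined from $\sigma'$ in the same way. If $\sigma$ and $\sigma'$ are cohomologous, then $(\alpha,\beta)$ and $(\alpha',\beta')$ are cohomologous.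
   Context: A rack is a set $X$ with binary operation $*$ such that each $x\mapsto x*y$ is bijective (inverse $x\mapsto x*^{-1}y$) and $(x*y)*z=(x*z)*(y*z)$; a quandle also satisfies $x*x=x$. A good involution is $\rho:X\to X$ with $\rho^2=\mathrm{id}$, $\rho(x*y)=\rho(x)*y$, $x*\rho(y)=x*^{-1}y$; $(X,\rho)$ is a symmetric rack (quandle). $(X,\rho)$-module: data $(A,\phi,\psi,\eta)$ as in the claim satisfying, for all $x,y,z\in X$, $a\in A_z$, $b\in A_y$: (M1) $\phi_{x*y,z}\phi_{x,y}=\phi_{x*z,y*z}\phi_{x,z}$; (M2) $\phi_{x*y,z}\psi_{x,y}=\psi_{x*z,y*z}\phi_{y,z}$; (M3) $\eta_{\rho(x)}\eta_x=\mathrm{id}$; (M4) $\eta_{x*y}\phi_{x,y}=\phi_{\rho(x),y}\eta_x$; (M5) $\psi_{\rho(x),y}=\eta_{x*y}\psi_{x,y}$; (M6) $\phi_{x*^{-1}y,y}\phi_{x,\rho(y)}=\mathrm{id}$; (M7) $\psi_{x*y,z}(a)=\phi_{x*z,y*z}\psi_{x,z}(a)+\psi_{x*z,y*z}\psi_{y,z}(a)$; (M8) $\phi_{x*^{-1}y,y}\psi_{x,\rho(y)}(\eta_y(b))=-\psi_{x*\rho(y),y}(b)$. For a symmetric quandle one additionally requires (M9) $\phi_{x,x}(a)+\psi_{x,x}(a)=a$ for all $x$, $a\in A_x$. Symmetric rack 2-cocycle: a map $\sigma$ with $\sigma_{x,y}\in A_{x*y}$ such that for all $x,y,z$: (F1)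 $\sigma_{x*y,z}+\phi_{x*y,z}(\sigma_{x,y})=\phi_{x*z,y*z}(\sigma_{x,z})+\sigma_{x*z,y*z}+\psi_{x*z,y*z}(\sigma_{y,z})$; (F2) $\sigma_{\rho(x),y}=\eta_{x*y}(\sigma_{x,y})$; (F3) $\phi_{x*\rho(y),y}(\sigma_{x,\rho(y)})=-\sigma_{x*\rho(y),y}$. A symmetric quandle 2-cocycle additionally satisfies $\sigma_{x,x}=0$ for all $x$. Two such 2-cocycles $\sigma,\sigma'$ are cohomologous if there is $\tau$ with $\tau(x)\in A_x$, $\eta_x(\tau(x))=\tau(\rho(x))$ and $\sigma_{x,y}-\sigma'_{x,y}=\phi_{x,y}(\tau(x))-\tau(x*y)+\psi_{x,y}(\tau(y))$ for all $x,y$. Dynamical cocycle of $(X,\rho)$ over a family of sets $S=\{S_x\}$: families of maps $\alpha_{x,y}:S_x\times S_y\to S_{x*y}$, $\beta_x:S_x\to S_{\rho(x)}$ such that for all $x,y,z$, $s\in S_x,t\in S_y,w\in S_z$ (writing $\alpha_{x,y}(t)(s)=\alpha_{x,y}(s,t)$): (1) $\alpha_{x,y}(t)$ is a bijection $S_x\to S_{x*y}$; (2) $\alpha_{x*y,z}(\alpha_{x,y}(s,t),w)=\alpha_{x*z,y*z}(\alpha_{x,z}(s,w),\alpha_{y,z}(t,w))$; (3) $\alpha_{\rho(x),y}(\beta_x(s),t)=\beta_{x*y}(\alpha_{x,y}(s,t))$; (4) $\beta_{\rho(x)}\beta_x(s)=s$; (5) $\alpha_{x,\rho(y)}(\beta_y(t))(s)=(\alpha_{x*^{-1}y,y}(t))^{-1}(s)$;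 and for a symmetric quandle also (6) $\alpha_{x,x}(s,s)=s$. Two dynamical cocycles $(\alpha,\beta),(\alpha',\beta')$ over $S$ are cohomologous if there are permutations $\gamma_x$ of $S_x$ with $\alpha'_{x,y}(s,t)=\gamma_{x*y}(\alpha_{x,y}(\gamma_x^{-1}(s),\gamma_y^{-1}(t)))$ and $\beta'_x(s)=\gamma_{\rho(x)}(\beta_x(\gamma_x^{-1}(s)))$. *)

theory Defs
  imports "HOL-Algebra.Group"
begin

definition rack :: "('x \<Rightarrow> 'x \<Rightarrow> 'x) \<Rightarrow> bool" where
  "rack op \<longleftrightarrow> (\<forall>y. bij (\<lambda>x. op x y)) \<and>
     (\<forall>x y z. op (op x y) z = op (op x z) (op y z))"

definition rinv :: "('x \<Rightarrow> 'x \<Rightarrow> 'x) \<Rightarrow> 'x \<Rightarrow> 'x \<Rightarrow> 'x" where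
  "rinv op x y = inv_into UNIV (\<lambda>z. op z y) x"

definition quandle :: "('x \<Rightarrow> 'x \<Rightarrow> 'x) \<Rightarrow> bool" where
  "quandle op \<longleftrightarrow> rack op \<and> (\<forall>x. op x x = x)"

definition good_involution :: "('x \<Rightarrow> 'x \<Rightarrow> 'x) \<Rightarrow> ('x \<Rightarrow> 'x) \<Rightarrow> bool" where
  "good_involution op \<rho> \<longleftrightarrow> (\<forall>x. \<rho> (\<rho> x) = x) \<and>
     (\<forall>x y. \<rho> (op x y) = op (\<rho> x) y) \<and> (\<forall>x y. op x (\<rho> y) = rinv op x y)"

definition symmetric_rack :: "('x \<Rightarrow> 'x \<Rightarrow> 'x) \<Rightarrow> ('x \<Rightarrow> 'x) \<Rightarrow> bool" where
  "symmetric_rack op \<rho> \<longleftrightarrow> rack op \<and> good_involution op \<rho>"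

definition symmetric_quandle :: "('x \<Rightarrow> 'x \<Rightarrow> 'x) \<Rightarrow> ('x \<Rightarrow> 'x) \<Rightarrow> bool" where
  "symmetric_quandle op \<rho> \<longleftrightarrow> quandle op \<and> good_involution op \<rho>"

text \<open>The abelian groups A_x are HOL-Algebra commutative groups (written
multiplicatively: the group operation plays the role of +, inv of -, one of 0).\<close>

definition sym_rack_module ::
  "('x \<Rightarrow> 'x \<Rightarrow> 'x) \<Rightarrow> ('x \<Rightarrow> 'x) \<Rightarrow> ('x \<Rightarrow> ('a, 'm) monoid_scheme)
   \<Rightarrow> ('x \<Rightarrow> 'x \<Rightarrow> 'a \<Rightarrow> 'a) \<Rightarrow> ('x \<Rightarrow> 'x \<Rightarrow> 'a \<Rightarrow> 'a) \<Rightarrow> ('x \<Rightarrow> 'a \<Rightarrow> 'a) \<Rightarrow> bool" where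
  "sym_rack_module op \<rho> A \<phi> \<psi> \<eta> \<longleftrightarrow>
     (\<forall>x. comm_group (A x)) \<and>
     (\<forall>x y. \<phi> x y \<in> iso (A x) (A (op x y))) \<and>
     (\<forall>x y. \<psi> x y \<in> hom (A y) (A (op x y))) \<and>
     (\<forall>x. \<eta> x \<in> hom (A x) (A (\<rho> x))) \<and>
     \<comment> \<open>(M1)\<close>
     (\<forall>x y z. \<forall>a\<in>carrier (A x).
        \<phi> (op x y) z (\<phi> x y a) = \<phi> (op x z) (op y z) (\<phi> x z a)) \<and>
     \<comment> \<open>(M2)\<close>
     (\<forall>x y z. \<forall>b\<in>carrier (A y).
        \<phi> (op x y) z (\<psi> x y b) = \<psi> (op x z) (op y z) (\<phi> y z b)) \<and>
     \<comment> \<open>(M3)\<close>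
     (\<forall>x. \<forall>a\<in>carrier (A x). \<eta> (\<rho> x) (\<eta> x a) = a) \<and>
     \<comment> \<open>(M4)\<close>
     (\<forall>x y. \<forall>a\<in>carrier (A x). \<eta> (op x y) (\<phi> x y a) = \<phi> (\<rho> x) y (\<eta> x a)) \<and>
     \<comment> \<open>(M5)\<close>
     (\<forall>x y. \<forall>b\<in>carrier (A y). \<psi> (\<rho> x) y b = \<eta> (op x y) (\<psi> x y b)) \<and>
     \<comment> \<open>(M6)\<close>
     (\<forall>x y. \<forall>a\<in>carrier (A x). \<phi> (rinv op x y) y (\<phi> x (\<rho> y) a) = a) \<and>
     \<comment> \<open>(M7)\<close>
     (\<forall>x y z. \<forall>a\<in>carrier (A z).
        \<psi> (op x y) z a = \<phi> (op x z) (op y z) (\<psi> x z a)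
                          \<otimes>\<^bsub>A (op (op x z) (op y z))\<^esub> \<psi> (op x z) (op y z) (\<psi> y z a)) \<and>
     \<comment> \<open>(M8)\<close>
     (\<forall>x y. \<forall>b\<in>carrier (A y).
        \<phi> (rinv op x y) y (\<psi> x (\<rho> y) (\<eta> y b))
          = inv\<^bsub>A (op (op x (\<rho> y)) y)\<^esub> (\<psi> (op x (\<rho> y)) y b))"

definition sym_quandle_module ::
  "('x \<Rightarrow> 'x \<Rightarrow> 'x) \<Rightarrow> ('x \<Rightarrow> 'x) \<Rightarrow> ('x \<Rightarrow> ('a, 'm) monoid_scheme)
   \<Rightarrow> ('x \<Rightarrow> 'x \<Rightarrow> 'a \<Rightarrow> 'a) \<Rightarrow> ('x \<Rightarrow> 'x \<Rightarrow> 'a \<Rightarrow> 'a) \<Rightarrow> ('x \<Rightarrow> 'a \<Rightarrow> 'a) \<Rightarrow> bool" where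
  "sym_quandle_module op \<rho> A \<phi> \<psi> \<eta> \<longleftrightarrow>
     sym_rack_module op \<rho> A \<phi> \<psi> \<eta> \<and>
     \<comment> \<open>(M9)\<close>
     (\<forall>x. \<forall>a\<in>carrier (A x). \<phi> x x a \<otimes>\<^bsub>A (op x x)\<^esub> \<psi> x x a = a)"

definition sym_rack_2cocycle ::
  "('x \<Rightarrow> 'x \<Rightarrow> 'x) \<Rightarrow> ('x \<Rightarrow> 'x) \<Rightarrow> ('x \<Rightarrow> ('a, 'm) monoid_scheme)
   \<Rightarrow> ('x \<Rightarrow> 'x \<Rightarrow> 'a \<Rightarrow> 'a) \<Rightarrow> ('x \<Rightarrow> 'x \<Rightarrow> 'a \<Rightarrow> 'a) \<Rightarrow> ('x \<Rightarrow> 'a \<Rightarrow> 'a)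
   \<Rightarrow> ('x \<Rightarrow> 'x \<Rightarrow> 'a) \<Rightarrow> bool" where
  "sym_rack_2cocycle op \<rho> A \<phi> \<psi> \<eta> \<sigma> \<longleftrightarrow>
     (\<forall>x y. \<sigma> x y \<in> carrier (A (op x y))) \<and>
     \<comment> \<open>(F1)\<close>
     (\<forall>x y z.
        \<sigma> (op x y) z \<otimes>\<^bsub>A (op (op x y) z)\<^esub> \<phi> (op x y) z (\<sigma> x y)
        = \<phi> (op x z) (op y z) (\<sigma> x z) \<otimes>\<^bsub>A (op (op x z) (op y z))\<^esub> \<sigma> (op x z) (op y z)
            \<otimes>\<^bsub>A (op (op x z) (op y z))\<^esub> \<psi> (op x z) (op y z) (\<sigma> y z)) \<and>
     \<comment> \<open>(F2)\<close>
     (\<forall>x y. \<sigma> (\<rho> x) y = \<eta> (op x y) (\<sigma> x y)) \<and>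
     \<comment> \<open>(F3)\<close>
     (\<forall>x y. \<phi> (op x (\<rho> y)) y (\<sigma> x (\<rho> y))
              = inv\<^bsub>A (op (op x (\<rho> y)) y)\<^esub> (\<sigma> (op x (\<rho> y)) y))"

definition sym_quandle_2cocycle ::
  "('x \<Rightarrow> 'x \<Rightarrow> 'x) \<Rightarrow> ('x \<Rightarrow> 'x) \<Rightarrow> ('x \<Rightarrow> ('a, 'm) monoid_scheme)
   \<Rightarrow> ('x \<Rightarrow> 'x \<Rightarrow> 'a \<Rightarrow> 'a) \<Rightarrow> ('x \<Rightarrow> 'x \<Rightarrow> 'a \<Rightarrow> 'a) \<Rightarrow> ('x \<Rightarrow> 'a \<Rightarrow> 'a)
   \<Rightarrow> ('x \<Rightarrow> 'x \<Rightarrow> 'a) \<Rightarrow> bool" where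
  "sym_quandle_2cocycle op \<rho> A \<phi> \<psi> \<eta> \<sigma> \<longleftrightarrow>
     sym_rack_2cocycle op \<rho> A \<phi> \<psi> \<eta> \<sigma> \<and> (\<forall>x. \<sigma> x x = \<one>\<^bsub>A (op x x)\<^esub>)"

definition cohomologous_2cocycles ::
  "('x \<Rightarrow> 'x \<Rightarrow> 'x) \<Rightarrow> ('x \<Rightarrow> 'x) \<Rightarrow> ('x \<Rightarrow> ('a, 'm) monoid_scheme)
   \<Rightarrow> ('x \<Rightarrow> 'x \<Rightarrow> 'a \<Rightarrow> 'a) \<Rightarrow> ('x \<Rightarrow> 'x \<Rightarrow> 'a \<Rightarrow> 'a) \<Rightarrow> ('x \<Rightarrow> 'a \<Rightarrow> 'a)
   \<Rightarrow> ('x \<Rightarrow> 'x \<Rightarrow> 'a) \<Rightarrow> ('x \<Rightarrow> 'x \<Rightarrow> 'a) \<Rightarrow> bool" where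
  "cohomologous_2cocycles op \<rho> A \<phi> \<psi> \<eta> \<sigma> \<sigma>' \<longleftrightarrow>
     (\<exists>\<tau>. (\<forall>x. \<tau> x \<in> carrier (A x)) \<and>
          (\<forall>x. \<eta> x (\<tau> x) = \<tau> (\<rho> x)) \<and>
          (\<forall>x y. \<sigma> x y \<otimes>\<^bsub>A (op x y)\<^esub> inv\<^bsub>A (op x y)\<^esub> (\<sigma>' x y)
                 = \<phi> x y (\<tau> x) \<otimes>\<^bsub>A (op x y)\<^esub> inv\<^bsub>A (op x y)\<^esub> (\<tau> (op x y))
                     \<otimes>\<^bsub>A (op x y)\<^esub> \<psi> x y (\<tau> y)))"

definition dynamical_cocycle ::
  "('x \<Rightarrow> 'x \<Rightarrow> 'x) \<Rightarrow> ('x \<Rightarrow> 'x) \<Rightarrow> ('x \<Rightarrow> 's set)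
   \<Rightarrow> ('x \<Rightarrow> 'x \<Rightarrow> 's \<Rightarrow> 's \<Rightarrow> 's) \<Rightarrow> ('x \<Rightarrow> 's \<Rightarrow> 's) \<Rightarrow> bool" where
  "dynamical_cocycle op \<rho> S \<alpha> \<beta> \<longleftrightarrow>
     \<comment> \<open>the maps have the stated domains and codomains\<close>
     (\<forall>x y. \<forall>s\<in>S x. \<forall>t\<in>S y. \<alpha> x y s t \<in> S (op x y)) \<and>
     (\<forall>x. \<forall>s\<in>S x. \<beta> x s \<in> S (\<rho> x)) \<and>
     \<comment> \<open>(1)\<close>
     (\<forall>x y. \<forall>t\<in>S y. bij_betw (\<lambda>s. \<alpha> x y s t) (S x) (S (op x y))) \<and>
     \<comment> \<open>(2)\<close>
     (\<forall>x y z. \<forall>s\<in>S x. \<forall>t\<in>S y. \<forall>w\<in>S z.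
        \<alpha> (op x y) z (\<alpha> x y s t) w = \<alpha> (op x z) (op y z) (\<alpha> x z s w) (\<alpha> y z t w)) \<and>
     \<comment> \<open>(3)\<close>
     (\<forall>x y. \<forall>s\<in>S x. \<forall>t\<in>S y. \<alpha> (\<rho> x) y (\<beta> x s) t = \<beta> (op x y) (\<alpha> x y s t)) \<and>
     \<comment> \<open>(4)\<close>
     (\<forall>x. \<forall>s\<in>S x. \<beta> (\<rho> x) (\<beta> x s) = s) \<and>
     \<comment> \<open>(5)\<close>
     (\<forall>x y. \<forall>s\<in>S x. \<forall>t\<in>S y.
        \<alpha> x (\<rho> y) s (\<beta> y t) = inv_into (S (rinv op x y)) (\<lambda>s'. \<alpha> (rinv op x y) y s' t) s)"

definition dynamical_cocycle_quandle ::
  "('x \<Rightarrow> 'x \<Rightarrow> 'x) \<Rightarrow> ('x \<Rightarrow> 'x) \<Rightarrow> ('x \<Rightarrow> 's set)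
   \<Rightarrow> ('x \<Rightarrow> 'x \<Rightarrow> 's \<Rightarrow> 's \<Rightarrow> 's) \<Rightarrow> ('x \<Rightarrow> 's \<Rightarrow> 's) \<Rightarrow> bool" where
  "dynamical_cocycle_quandle op \<rho> S \<alpha> \<beta> \<longleftrightarrow>
     dynamical_cocycle op \<rho> S \<alpha> \<beta> \<and> (\<forall>x. \<forall>s\<in>S x. \<alpha> x x s s = s)"

definition cohomologous_dyn ::
  "('x \<Rightarrow> 'x \<Rightarrow> 'x) \<Rightarrow> ('x \<Rightarrow> 'x) \<Rightarrow> ('x \<Rightarrow> 's set)
   \<Rightarrow> ('x \<Rightarrow> 'x \<Rightarrow> 's \<Rightarrow> 's \<Rightarrow> 's) \<Rightarrow> ('x \<Rightarrow> 's \<Rightarrow> 's)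
   \<Rightarrow> ('x \<Rightarrow> 'x \<Rightarrow> 's \<Rightarrow> 's \<Rightarrow> 's) \<Rightarrow> ('x \<Rightarrow> 's \<Rightarrow> 's) \<Rightarrow> bool" where
  "cohomologous_dyn op \<rho> S \<alpha> \<beta> \<alpha>' \<beta>' \<longleftrightarrow>
     (\<exists>\<gamma>. (\<forall>x. bij_betw (\<gamma> x) (S x) (S x)) \<and>
          (\<forall>x y. \<forall>s\<in>S x. \<forall>t\<in>S y.
             \<alpha>' x y s t = \<gamma> (op x y) (\<alpha> x y (inv_into (S x) (\<gamma> x) s) (inv_into (S y) (\<gamma> y) t))) \<and>
          (\<forall>x. \<forall>s\<in>S x. \<beta>' x s = \<gamma> (\<rho> x) (\<beta> x (inv_into (S x) (\<gamma> x) s))))"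

definition alpha_of ::
  "('x \<Rightarrow> 'x \<Rightarrow> 'x) \<Rightarrow> ('x \<Rightarrow> ('a, 'm) monoid_scheme)
   \<Rightarrow> ('x \<Rightarrow> 'x \<Rightarrow> 'a \<Rightarrow> 'a) \<Rightarrow> ('x \<Rightarrow> 'x \<Rightarrow> 'a \<Rightarrow> 'a) \<Rightarrow> ('x \<Rightarrow> 'x \<Rightarrow> 'a)
   \<Rightarrow> 'x \<Rightarrow> 'x \<Rightarrow> 'a \<Rightarrow> 'a \<Rightarrow> 'a" where
  "alpha_of op A \<phi> \<psi> \<sigma> x y a b =
     \<phi> x y a \<otimes>\<^bsub>A (op x y)\<^esub> \<psi> x y b \<otimes>\<^bsub>A (op x y)\<^esub> \<sigma> x y"

end

theory Submission
  imports Defs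
begin

text \<open>Every axiom of a dynamical cocycle for \<open>\<alpha>\<^sub>x\<^sub>y(a, b) = \<phi>\<^sub>x\<^sub>y(a) + \<psi>\<^sub>x\<^sub>y(b) + \<sigma>\<^sub>x\<^sub>y\<close>
is an identity between affine functions of elements of the abelian groups \<open>A\<^sub>x\<close>.
Setting all but one of the variables to zero separates such an identity into equalities of the
homomorphic parts, which are the module axioms, and an equality of the constant terms, which is
the corresponding cocycle condition. For (B), translating each \<open>A\<^sub>x\<close> by the cochain \<open>\<tau>\<close>
relating \<open>\<sigma>\<close> and \<open>\<sigma>'\<close> conjugates \<open>(\<alpha>, \<eta>)\<close> into \<open>(\<alpha>', \<eta>)\<close>.\<close>

lemma (in comm_group) separation_of_variables3:
  assumes maps: "f1 \<in> S1 \<rightarrow> carrier G" "g1 \<in> S1 \<rightarrow> carrier G"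
      "f2 \<in> S2 \<rightarrow> carrier G" "g2 \<in> S2 \<rightarrow> carrier G"
      "f3 \<in> S3 \<rightarrow> carrier G" "g3 \<in> S3 \<rightarrow> carrier G"
    and base: "u1 \<in> S1" "u2 \<in> S2" "u3 \<in> S3"
    and vanish: "f1 u1 = \<one>" "g1 u1 = \<one>" "f2 u2 = \<one>" "g2 u2 = \<one>" "f3 u3 = \<one>" "g3 u3 = \<one>"
    and constants: "c \<in> carrier G" "d \<in> carrier G"
  shows "(\<forall>s\<in>S1. \<forall>t\<in>S2. \<forall>w\<in>S3. f1 s \<otimes> f2 t \<otimes> f3 w \<otimes> c = g1 s \<otimes> g2 t \<otimes> g3 w \<otimes> d)
    \<longleftrightarrow> (\<forall>s\<in>S1. f1 s = g1 s) \<and> (\<forall>t\<in>S2. f2 t = g2 t) \<and> (\<forall>w\<in>S3. f3 w = g3 w) \<and> c = d"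
proof
  assume "\<forall>s\<in>S1. \<forall>t\<in>S2. \<forall>w\<in>S3. f1 s \<otimes> f2 t \<otimes> f3 w \<otimes> c = g1 s \<otimes> g2 t \<otimes> g3 w \<otimes> d"
  then have H: "f1 s \<otimes> f2 t \<otimes> f3 w \<otimes> c = g1 s \<otimes> g2 t \<otimes> g3 w \<otimes> d"
    if "s \<in> S1" "t \<in> S2" "w \<in> S3" for s t w
    using that by blast
  have "c = d"
    using H[OF base] vanish constants by simp
  moreover have "f1 s = g1 s" if "s \<in> S1" for s
    using H[OF that base(2,3)] vanish constants maps that \<open>c = d\<close> by (simp add: Pi_iff)
  moreover have "f2 t = g2 t" if "t \<in> S2" for t
    using H[OF base(1) that base(3)] vanish constants maps that \<open>c = d\<close> by (simp add: Pi_iff)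
  moreover have "f3 w = g3 w" if "w \<in> S3" for w
    using H[OF base(1,2) that] vanish constants maps that \<open>c = d\<close> by (simp add: Pi_iff)
  ultimately show "(\<forall>s\<in>S1. f1 s = g1 s) \<and> (\<forall>t\<in>S2. f2 t = g2 t) \<and> (\<forall>w\<in>S3. f3 w = g3 w) \<and> c = d"
    by blast
qed auto

lemma (in comm_group) separation_of_variables2:
  assumes "f1 \<in> S1 \<rightarrow> carrier G" "g1 \<in> S1 \<rightarrow> carrier G"
    and "f2 \<in> S2 \<rightarrow> carrier G" "g2 \<in> S2 \<rightarrow> carrier G"
    and "u1 \<in> S1" "f1 u1 = \<one>" "g1 u1 = \<one>"
    and "u2 \<in> S2" "f2 u2 = \<one>" "g2 u2 = \<one>"
    and "c \<in> carrier G" "d \<in> carrier G"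
  shows "(\<forall>s\<in>S1. \<forall>t\<in>S2. f1 s \<otimes> f2 t \<otimes> c = g1 s \<otimes> g2 t \<otimes> d)
    \<longleftrightarrow> (\<forall>s\<in>S1. f1 s = g1 s) \<and> (\<forall>t\<in>S2. f2 t = g2 t) \<and> c = d"
  using separation_of_variables3[of f1 S1 g1 f2 S2 g2 "\<lambda>w. w" "{\<one>}" "\<lambda>w. w"] assms
  by (simp add: Pi_iff)

lemma (in comm_group) separation_of_variables2_eq_id:
  assumes "S1 \<subseteq> carrier G" "f1 \<in> S1 \<rightarrow> carrier G" "f2 \<in> S2 \<rightarrow> carrier G"
    and "\<one> \<in> S1" "f1 \<one> = \<one>"
    and "u2 \<in> S2" "f2 u2 = \<one>"
    and "c \<in> carrier G"
  shows "(\<forall>s\<in>S1. \<forall>t\<in>S2. f1 s \<otimes> f2 t \<otimes> c = s)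
    \<longleftrightarrow> (\<forall>s\<in>S1. f1 s = s) \<and> (\<forall>t\<in>S2. f2 t = \<one>) \<and> c = \<one>"
  using separation_of_variables2[of f1 S1 "\<lambda>s. s" f2 S2 "\<lambda>t. \<one>" "\<one>" u2 c \<one>] assms
  by (auto simp: Pi_iff subset_iff)

lemma (in comm_group) separation_of_variables1_eq_id:
  assumes "S \<subseteq> carrier G" "f \<in> S \<rightarrow> carrier G" "\<one> \<in> S" "f \<one> = \<one>" "c \<in> carrier G"
  shows "(\<forall>s\<in>S. f s \<otimes> c = s) \<longleftrightarrow> (\<forall>s\<in>S. f s = s) \<and> c = \<one>"
  using separation_of_variables2_eq_id[of S f "\<lambda>t. \<one>" "{\<one>}" \<one> c] assms
  by (simp add: Pi_iff)

lemma (in group) mult_eq_one_iff_eq_inv: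
  assumes "u \<in> carrier G" "v \<in> carrier G"
  shows "u \<otimes> v = \<one> \<longleftrightarrow> u = inv v"
  using assms by (metis inv_equality inv_closed r_inv)

lemma (in group) bij_betw_mult_right:
  assumes "c \<in> carrier G"
  shows "bij_betw (\<lambda>a. a \<otimes> c) (carrier G) (carrier G)"
  by (rule bij_betw_byWitness[where f'="\<lambda>a. a \<otimes> inv c"]) (use assms in \<open>auto simp: m_assoc\<close>)

lemma eq_inv_into_iff:
  assumes "bij_betw f S T" "v \<in> S" "s \<in> T"
  shows "v = inv_into S f s \<longleftrightarrow> f v = s"
  using assms by (metis bij_betw_inv_into_left bij_betw_inv_into_right)

lemma (in group) inv_into_mult_right:
  assumes "c \<in> carrier G" "a \<in> carrier G"
  shows "inv_into (carrier G) (\<lambda>b. b \<otimes> c) a = a \<otimes> inv c"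
  using assms by (intro inv_into_f_eq inj_on_multc) (auto simp: m_assoc)

locale affine_dynamical_data =
  fixes op :: "'x \<Rightarrow> 'x \<Rightarrow> 'x" and \<rho> :: "'x \<Rightarrow> 'x"
    and A :: "'x \<Rightarrow> ('a, 'm) monoid_scheme"
    and \<phi> \<psi> :: "'x \<Rightarrow> 'x \<Rightarrow> 'a \<Rightarrow> 'a" and \<eta> :: "'x \<Rightarrow> 'a \<Rightarrow> 'a"
    and \<sigma> :: "'x \<Rightarrow> 'x \<Rightarrow> 'a"
  assumes symrack: "symmetric_rack op \<rho>"
    and ab: "\<And>x. comm_group (A x)"
    and phi_iso: "\<And>x y. \<phi> x y \<in> iso (A x) (A (op x y))"
    and psi_hom: "\<And>x y. \<psi> x y \<in> hom (A y) (A (op x y))"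
    and eta_hom: "\<And>x. \<eta> x \<in> hom (A x) (A (\<rho> x))"
    and sigma_in: "\<And>x y. \<sigma> x y \<in> carrier (A (op x y))"
begin

abbreviation \<alpha> where "\<alpha> \<equiv> alpha_of op A \<phi> \<psi> \<sigma>"

lemma self_distrib: "op (op x y) z = op (op x z) (op y z)"
  using symrack unfolding symmetric_rack_def rack_def by blast

lemma rho_op: "\<rho> (op x y) = op (\<rho> x) y"
  using symrack by (simp add: symmetric_rack_def good_involution_def)

lemma rinv_eq_op_rho: "rinv op x y = op x (\<rho> y)"
  using symrack by (simp add: symmetric_rack_def good_involution_def)

lemma op_rho_op: "op (op x (\<rho> y)) y = x"
proof -
  have "bij (\<lambda>x. op x y)" using symrack unfolding symmetric_rack_def rack_def by blast
  then have "op (rinv op x y) y = x" unfolding rinv_def by (meson bij_inv_eq_iff)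
  then show ?thesis by (simp add: rinv_eq_op_rho)
qed

sublocale A: comm_group "A x" for x by (rule ab)

lemma phi_group_hom: "group_hom (A x) (A (op x y)) (\<phi> x y)"
  using phi_iso by (simp add: iso_def group_hom_def group_hom_axioms_def A.group_axioms)

lemma psi_group_hom: "group_hom (A y) (A (op x y)) (\<psi> x y)"
  using psi_hom by (simp add: group_hom_def group_hom_axioms_def A.group_axioms)

lemma eta_group_hom: "group_hom (A x) (A (\<rho> x)) (\<eta> x)"
  using eta_hom by (simp add: group_hom_def group_hom_axioms_def A.group_axioms)

lemmas hom_simps [simp] =
  group_hom.hom_mult[OF phi_group_hom] group_hom.hom_one[OF phi_group_hom]
  group_hom.hom_inv[OF phi_group_hom]
  group_hom.hom_mult[OF psi_group_hom] group_hom.hom_one[OF psi_group_hom]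
  group_hom.hom_inv[OF psi_group_hom]
  group_hom.hom_mult[OF eta_group_hom] group_hom.hom_one[OF eta_group_hom]
  group_hom.hom_inv[OF eta_group_hom]

text \<open>The target index \<open>k\<close> is left open so that the simplifier also places these elements in
groups \<open>A k\<close> whose index equals \<open>op x y\<close> (or \<open>\<rho> x\<close>) only by a rack identity.\<close>

lemma phi_closed [simp]: "op x y = k \<Longrightarrow> a \<in> carrier (A x) \<Longrightarrow> \<phi> x y a \<in> carrier (A k)"
  using group_hom.hom_closed[OF phi_group_hom] by blast

lemma psi_closed [simp]: "op x y = k \<Longrightarrow> b \<in> carrier (A y) \<Longrightarrow> \<psi> x y b \<in> carrier (A k)"
  using group_hom.hom_closed[OF psi_group_hom] by blast

lemma eta_closed [simp]: "\<rho> x = k \<Longrightarrow> a \<in> carrier (A x) \<Longrightarrow> \<eta> x a \<in> carrier (A k)"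
  using group_hom.hom_closed[OF eta_group_hom] by blast

lemma sigma_closed [simp]: "op x y = k \<Longrightarrow> \<sigma> x y \<in> carrier (A k)"
  using sigma_in by blast

lemma alpha_closed [simp]:
  "op x y = k \<Longrightarrow> s \<in> carrier (A x) \<Longrightarrow> t \<in> carrier (A y) \<Longrightarrow> \<alpha> x y s t \<in> carrier (A k)"
  by (auto simp: alpha_of_def)

lemma bij_betw_alpha:
  assumes "t \<in> carrier (A y)"
  shows "bij_betw (\<lambda>s. \<alpha> x y s t) (carrier (A x)) (carrier (A (op x y)))"
proof -
  let ?c = "\<psi> x y t \<otimes>\<^bsub>A (op x y)\<^esub> \<sigma> x y"
  have bij: "bij_betw ((\<lambda>u. u \<otimes>\<^bsub>A (op x y)\<^esub> ?c) \<circ> \<phi> x y) (carrier (A x)) (carrier (A (op x y)))"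
    using phi_iso assms by (intro bij_betw_trans[where B="carrier (A (op x y))"] A.bij_betw_mult_right)
      (auto simp: iso_def)
  have eq: "((\<lambda>u. u \<otimes>\<^bsub>A (op x y)\<^esub> ?c) \<circ> \<phi> x y) s = \<alpha> x y s t" if "s \<in> carrier (A x)" for s
    using that assms by (simp add: alpha_of_def A.m_assoc)
  show ?thesis
    by (rule bij_betw_cong[THEN iffD1, OF eq bij])
qed

lemma alpha_self_distrib_iff:
  "(\<forall>s\<in>carrier (A x). \<forall>t\<in>carrier (A y). \<forall>w\<in>carrier (A z).
      \<alpha> (op x y) z (\<alpha> x y s t) w = \<alpha> (op x z) (op y z) (\<alpha> x z s w) (\<alpha> y z t w))
   \<longleftrightarrow> (\<forall>a\<in>carrier (A x). \<phi> (op x y) z (\<phi> x y a) = \<phi> (op x z) (op y z) (\<phi> x z a))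
     \<and> (\<forall>b\<in>carrier (A y). \<phi> (op x y) z (\<psi> x y b) = \<psi> (op x z) (op y z) (\<phi> y z b))
     \<and> (\<forall>a\<in>carrier (A z). \<psi> (op x y) z a = \<phi> (op x z) (op y z) (\<psi> x z a)
                          \<otimes>\<^bsub>A (op (op x z) (op y z))\<^esub> \<psi> (op x z) (op y z) (\<psi> y z a))
     \<and> (\<sigma> (op x y) z \<otimes>\<^bsub>A (op (op x y) z)\<^esub> \<phi> (op x y) z (\<sigma> x y)
        = \<phi> (op x z) (op y z) (\<sigma> x z) \<otimes>\<^bsub>A (op (op x z) (op y z))\<^esub> \<sigma> (op x z) (op y z)
            \<otimes>\<^bsub>A (op (op x z) (op y z))\<^esub> \<psi> (op x z) (op y z) (\<sigma> y z))"
  (is "_ \<longleftrightarrow> ?module_and_cocycle")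
proof -
  have idx: "op (op x z) (op y z) = op (op x y) z"
    by (rule self_distrib[symmetric])
  let ?G = "A (op (op x y) z)"
  have "(\<forall>s\<in>carrier (A x). \<forall>t\<in>carrier (A y). \<forall>w\<in>carrier (A z).
      \<alpha> (op x y) z (\<alpha> x y s t) w = \<alpha> (op x z) (op y z) (\<alpha> x z s w) (\<alpha> y z t w))
    \<longleftrightarrow> (\<forall>s\<in>carrier (A x). \<forall>t\<in>carrier (A y). \<forall>w\<in>carrier (A z).
      \<phi> (op x y) z (\<phi> x y s) \<otimes>\<^bsub>?G\<^esub> \<phi> (op x y) z (\<psi> x y t) \<otimes>\<^bsub>?G\<^esub> \<psi> (op x y) z w
        \<otimes>\<^bsub>?G\<^esub> (\<sigma> (op x y) z \<otimes>\<^bsub>?G\<^esub> \<phi> (op x y) z (\<sigma> x y))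
      = \<phi> (op x z) (op y z) (\<phi> x z s) \<otimes>\<^bsub>?G\<^esub> \<psi> (op x z) (op y z) (\<phi> y z t)
        \<otimes>\<^bsub>?G\<^esub> (\<phi> (op x z) (op y z) (\<psi> x z w) \<otimes>\<^bsub>?G\<^esub> \<psi> (op x z) (op y z) (\<psi> y z w))
        \<otimes>\<^bsub>?G\<^esub> (\<phi> (op x z) (op y z) (\<sigma> x z) \<otimes>\<^bsub>?G\<^esub> \<sigma> (op x z) (op y z)
          \<otimes>\<^bsub>?G\<^esub> \<psi> (op x z) (op y z) (\<sigma> y z)))"
    by (intro ball_cong refl) (simp add: alpha_of_def idx A.m_ac)
  also have "\<dots> \<longleftrightarrow> ?module_and_cocycle"
    unfolding idx by (rule A.separation_of_variables3) (auto simp: idx)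
  finally show ?thesis .
qed

lemma alpha_eta_iff:
  "(\<forall>s\<in>carrier (A x). \<forall>t\<in>carrier (A y). \<alpha> (\<rho> x) y (\<eta> x s) t = \<eta> (op x y) (\<alpha> x y s t))
   \<longleftrightarrow> (\<forall>a\<in>carrier (A x). \<eta> (op x y) (\<phi> x y a) = \<phi> (\<rho> x) y (\<eta> x a))
     \<and> (\<forall>b\<in>carrier (A y). \<psi> (\<rho> x) y b = \<eta> (op x y) (\<psi> x y b))
     \<and> \<sigma> (\<rho> x) y = \<eta> (op x y) (\<sigma> x y)"
proof -
  let ?G = "A (op (\<rho> x) y)"
  have "(\<forall>s\<in>carrier (A x). \<forall>t\<in>carrier (A y). \<alpha> (\<rho> x) y (\<eta> x s) t = \<eta> (op x y) (\<alpha> x y s t))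
    \<longleftrightarrow> (\<forall>s\<in>carrier (A x). \<forall>t\<in>carrier (A y).
      \<phi> (\<rho> x) y (\<eta> x s) \<otimes>\<^bsub>?G\<^esub> \<psi> (\<rho> x) y t \<otimes>\<^bsub>?G\<^esub> \<sigma> (\<rho> x) y
      = \<eta> (op x y) (\<phi> x y s) \<otimes>\<^bsub>?G\<^esub> \<eta> (op x y) (\<psi> x y t) \<otimes>\<^bsub>?G\<^esub> \<eta> (op x y) (\<sigma> x y))"
    by (intro ball_cong refl) (simp add: alpha_of_def rho_op)
  also have "\<dots> \<longleftrightarrow> (\<forall>a\<in>carrier (A x). \<phi> (\<rho> x) y (\<eta> x a) = \<eta> (op x y) (\<phi> x y a))
     \<and> (\<forall>b\<in>carrier (A y). \<psi> (\<rho> x) y b = \<eta> (op x y) (\<psi> x y b))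
     \<and> \<sigma> (\<rho> x) y = \<eta> (op x y) (\<sigma> x y)"
    by (rule A.separation_of_variables2) (auto simp: rho_op)
  finally show ?thesis
    by (metis (no_types, lifting))
qed

lemma alpha_rho_iff:
  "(\<forall>s\<in>carrier (A x). \<forall>t\<in>carrier (A y).
      \<alpha> x (\<rho> y) s (\<eta> y t) = inv_into (carrier (A (rinv op x y))) (\<lambda>s'. \<alpha> (rinv op x y) y s' t) s)
   \<longleftrightarrow> (\<forall>a\<in>carrier (A x). \<phi> (rinv op x y) y (\<phi> x (\<rho> y) a) = a)
     \<and> (\<forall>b\<in>carrier (A y). \<phi> (rinv op x y) y (\<psi> x (\<rho> y) (\<eta> y b))
          = inv\<^bsub>A (op (op x (\<rho> y)) y)\<^esub> (\<psi> (op x (\<rho> y)) y b))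
     \<and> \<phi> (op x (\<rho> y)) y (\<sigma> x (\<rho> y)) = inv\<^bsub>A (op (op x (\<rho> y)) y)\<^esub> (\<sigma> (op x (\<rho> y)) y)"
proof -
  let ?x' = "op x (\<rho> y)"
  have bij: "bij_betw (\<lambda>s'. \<alpha> ?x' y s' t) (carrier (A ?x')) (carrier (A x))" if "t \<in> carrier (A y)" for t
    using bij_betw_alpha[OF that, of ?x'] by (simp add: op_rho_op)
  have "(\<forall>s\<in>carrier (A x). \<forall>t\<in>carrier (A y).
      \<alpha> x (\<rho> y) s (\<eta> y t) = inv_into (carrier (A ?x')) (\<lambda>s'. \<alpha> ?x' y s' t) s)
    \<longleftrightarrow> (\<forall>s\<in>carrier (A x). \<forall>t\<in>carrier (A y). \<alpha> ?x' y (\<alpha> x (\<rho> y) s (\<eta> y t)) t = s)"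
    by (intro ball_cong refl) (rule eq_inv_into_iff[OF bij]; simp add: op_rho_op)
  also have "\<dots> \<longleftrightarrow> (\<forall>s\<in>carrier (A x). \<forall>t\<in>carrier (A y).
      \<phi> ?x' y (\<phi> x (\<rho> y) s) \<otimes>\<^bsub>A x\<^esub> (\<phi> ?x' y (\<psi> x (\<rho> y) (\<eta> y t)) \<otimes>\<^bsub>A x\<^esub> \<psi> ?x' y t)
        \<otimes>\<^bsub>A x\<^esub> (\<phi> ?x' y (\<sigma> x (\<rho> y)) \<otimes>\<^bsub>A x\<^esub> \<sigma> ?x' y) = s)"
    by (intro ball_cong refl) (simp add: alpha_of_def op_rho_op A.m_ac)
  also have "\<dots> \<longleftrightarrow> (\<forall>a\<in>carrier (A x). \<phi> ?x' y (\<phi> x (\<rho> y) a) = a)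
     \<and> (\<forall>b\<in>carrier (A y). \<phi> ?x' y (\<psi> x (\<rho> y) (\<eta> y b)) \<otimes>\<^bsub>A x\<^esub> \<psi> ?x' y b = \<one>\<^bsub>A x\<^esub>)
     \<and> \<phi> ?x' y (\<sigma> x (\<rho> y)) \<otimes>\<^bsub>A x\<^esub> \<sigma> ?x' y = \<one>\<^bsub>A x\<^esub>"
    by (rule A.separation_of_variables2_eq_id) (auto simp: op_rho_op)
  also have "\<dots> \<longleftrightarrow> (\<forall>a\<in>carrier (A x). \<phi> ?x' y (\<phi> x (\<rho> y) a) = a)
     \<and> (\<forall>b\<in>carrier (A y). \<phi> ?x' y (\<psi> x (\<rho> y) (\<eta> y b)) = inv\<^bsub>A x\<^esub> (\<psi> ?x' y b))
     \<and> \<phi> ?x' y (\<sigma> x (\<rho> y)) = inv\<^bsub>A x\<^esub> (\<sigma> ?x' y)"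
    by (intro conj_cong ball_cong refl A.mult_eq_one_iff_eq_inv) (simp_all add: op_rho_op)
  finally show ?thesis
    unfolding rinv_eq_op_rho op_rho_op .
qed

lemma alpha_idempotent_iff:
  assumes "op x x = x"
  shows "(\<forall>s\<in>carrier (A x). \<alpha> x x s s = s)
    \<longleftrightarrow> (\<forall>a\<in>carrier (A x). \<phi> x x a \<otimes>\<^bsub>A (op x x)\<^esub> \<psi> x x a = a) \<and> \<sigma> x x = \<one>\<^bsub>A (op x x)\<^esub>"
  unfolding alpha_of_def assms by (rule A.separation_of_variables1_eq_id) (auto simp: assms)

lemma dynamical_cocycle_iff_module_and_2cocycle:
  "dynamical_cocycle op \<rho> (\<lambda>x. carrier (A x)) \<alpha> \<eta>
     \<longleftrightarrow> sym_rack_module op \<rho> A \<phi> \<psi> \<eta> \<and> sym_rack_2cocycle op \<rho> A \<phi> \<psi> \<eta> \<sigma>"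
  unfolding dynamical_cocycle_def sym_rack_module_def sym_rack_2cocycle_def
  by (simp only: alpha_self_distrib_iff alpha_eta_iff alpha_rho_iff all_conj_distrib)
    (auto simp: bij_betw_alpha ab phi_iso psi_hom eta_hom)

lemma dynamical_cocycle_quandle_iff_module_and_2cocycle:
  assumes "\<And>x. op x x = x"
  shows "dynamical_cocycle_quandle op \<rho> (\<lambda>x. carrier (A x)) \<alpha> \<eta>
     \<longleftrightarrow> sym_quandle_module op \<rho> A \<phi> \<psi> \<eta> \<and> sym_quandle_2cocycle op \<rho> A \<phi> \<psi> \<eta> \<sigma>"
  unfolding dynamical_cocycle_quandle_def sym_quandle_module_def sym_quandle_2cocycle_def
    dynamical_cocycle_iff_module_and_2cocycle
  by (simp only: alpha_idempotent_iff[OF assms] all_conj_distrib) blast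

lemma cohomologous_dyn_if_cohomologous_2cocycles:
  assumes "cohomologous_2cocycles op \<rho> A \<phi> \<psi> \<eta> \<sigma> \<sigma>'"
    and sigma'_in: "\<And>x y. \<sigma>' x y \<in> carrier (A (op x y))"
  shows "cohomologous_dyn op \<rho> (\<lambda>x. carrier (A x)) \<alpha> \<eta> (alpha_of op A \<phi> \<psi> \<sigma>') \<eta>"
proof -
  obtain \<tau> where \<tau>_in: "\<And>x. \<tau> x \<in> carrier (A x)" and \<tau>_eta: "\<And>x. \<eta> x (\<tau> x) = \<tau> (\<rho> x)"
    and coboundary: "\<And>x y. \<sigma> x y \<otimes>\<^bsub>A (op x y)\<^esub> inv\<^bsub>A (op x y)\<^esub> (\<sigma>' x y)
                 = \<phi> x y (\<tau> x) \<otimes>\<^bsub>A (op x y)\<^esub> inv\<^bsub>A (op x y)\<^esub> (\<tau> (op x y))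
                     \<otimes>\<^bsub>A (op x y)\<^esub> \<psi> x y (\<tau> y)"
    using assms(1) unfolding cohomologous_2cocycles_def by blast
  have \<sigma>': "\<sigma>' x y = inv\<^bsub>A (op x y)\<^esub> (\<phi> x y (\<tau> x) \<otimes>\<^bsub>A (op x y)\<^esub> inv\<^bsub>A (op x y)\<^esub> (\<tau> (op x y))
                     \<otimes>\<^bsub>A (op x y)\<^esub> \<psi> x y (\<tau> y)) \<otimes>\<^bsub>A (op x y)\<^esub> \<sigma> x y" for x y
    using coboundary[of x y] \<tau>_in sigma'_in by (simp add: A.inv_solve_right' A.inv_solve_left)
  define \<gamma> where "\<gamma> x a = a \<otimes>\<^bsub>A x\<^esub> \<tau> x" for x a
  have \<gamma>_inv: "inv_into (carrier (A x)) (\<gamma> x) a = a \<otimes>\<^bsub>A x\<^esub> inv\<^bsub>A x\<^esub> \<tau> x" if "a \<in> carrier (A x)" for x a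
    unfolding \<gamma>_def using that \<tau>_in by (rule A.inv_into_mult_right[rotated])
  show ?thesis
    unfolding cohomologous_dyn_def
  proof (intro exI[of _ \<gamma>] conjI allI ballI)
    show "bij_betw (\<gamma> x) (carrier (A x)) (carrier (A x))" for x
      unfolding \<gamma>_def using \<tau>_in by (rule A.bij_betw_mult_right)
    show "alpha_of op A \<phi> \<psi> \<sigma>' x y s t
      = \<gamma> (op x y) (\<alpha> x y (inv_into (carrier (A x)) (\<gamma> x) s) (inv_into (carrier (A y)) (\<gamma> y) t))"
      if "s \<in> carrier (A x)" "t \<in> carrier (A y)" for x y s t
      using that \<tau>_in by (simp add: \<gamma>_inv \<gamma>_def alpha_of_def \<sigma>' A.inv_mult A.m_ac)
    show "\<eta> x s = \<gamma> (\<rho> x) (\<eta> x (inv_into (carrier (A x)) (\<gamma> x) s))" if "s \<in> carrier (A x)" for x s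
      using that \<tau>_in by (simp add: \<gamma>_inv \<gamma>_def \<tau>_eta A.m_assoc)
  qed
qed

end

theorem theorem4p1:
  fixes op :: "'x \<Rightarrow> 'x \<Rightarrow> 'x" and \<rho> :: "'x \<Rightarrow> 'x"
    and A :: "'x \<Rightarrow> ('a, 'm) monoid_scheme"
    and \<phi> \<psi> :: "'x \<Rightarrow> 'x \<Rightarrow> 'a \<Rightarrow> 'a" and \<eta> :: "'x \<Rightarrow> 'a \<Rightarrow> 'a"
    and \<sigma> :: "'x \<Rightarrow> 'x \<Rightarrow> 'a"
  assumes symrack: "symmetric_rack op \<rho>"
    and ab: "\<And>x. comm_group (A x)"
    and phi_iso: "\<And>x y. \<phi> x y \<in> iso (A x) (A (op x y))"
    and psi_hom: "\<And>x y. \<psi> x y \<in> hom (A y) (A (op x y))"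
    and eta_hom: "\<And>x. \<eta> x \<in> hom (A x) (A (\<rho> x))"
    and sigma_in: "\<And>x y. \<sigma> x y \<in> carrier (A (op x y))"
  shows
    "(dynamical_cocycle op \<rho> (\<lambda>x. carrier (A x)) (alpha_of op A \<phi> \<psi> \<sigma>) \<eta>
        \<longleftrightarrow> sym_rack_module op \<rho> A \<phi> \<psi> \<eta> \<and> sym_rack_2cocycle op \<rho> A \<phi> \<psi> \<eta> \<sigma>)
     \<and> (symmetric_quandle op \<rho> \<longrightarrow>
         (dynamical_cocycle_quandle op \<rho> (\<lambda>x. carrier (A x)) (alpha_of op A \<phi> \<psi> \<sigma>) \<eta>
           \<longleftrightarrow> sym_quandle_module op \<rho> A \<phi> \<psi> \<eta> \<and> sym_quandle_2cocycle op \<rho> A \<phi> \<psi> \<eta> \<sigma>))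
     \<and> (\<forall>\<sigma>'. sym_rack_module op \<rho> A \<phi> \<psi> \<eta>
           \<longrightarrow> sym_rack_2cocycle op \<rho> A \<phi> \<psi> \<eta> \<sigma>
           \<longrightarrow> sym_rack_2cocycle op \<rho> A \<phi> \<psi> \<eta> \<sigma>'
           \<longrightarrow> cohomologous_2cocycles op \<rho> A \<phi> \<psi> \<eta> \<sigma> \<sigma>'
           \<longrightarrow> cohomologous_dyn op \<rho> (\<lambda>x. carrier (A x))
                 (alpha_of op A \<phi> \<psi> \<sigma>) \<eta> (alpha_of op A \<phi> \<psi> \<sigma>') \<eta>)
     \<and> (symmetric_quandle op \<rho> \<longrightarrow> (\<forall>\<sigma>'. sym_quandle_module op \<rho> A \<phi> \<psi> \<eta>
           \<longrightarrow> sym_quandle_2cocycle op \<rho> A \<phi> \<psi> \<eta> \<sigma>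
           \<longrightarrow> sym_quandle_2cocycle op \<rho> A \<phi> \<psi> \<eta> \<sigma>'
           \<longrightarrow> cohomologous_2cocycles op \<rho> A \<phi> \<psi> \<eta> \<sigma> \<sigma>'
           \<longrightarrow> cohomologous_dyn op \<rho> (\<lambda>x. carrier (A x))
                 (alpha_of op A \<phi> \<psi> \<sigma>) \<eta> (alpha_of op A \<phi> \<psi> \<sigma>') \<eta>))"
proof -
  interpret affine_dynamical_data op \<rho> A \<phi> \<psi> \<eta> \<sigma>
    using assms by (simp add: affine_dynamical_data_def)
  have idempotent: "op x x = x" if "symmetric_quandle op \<rho>" for x
    using that by (simp add: symmetric_quandle_def quandle_def)
  have cohomologous: "cohomologous_dyn op \<rho> (\<lambda>x. carrier (A x)) \<alpha> \<eta> (alpha_of op A \<phi> \<psi> \<sigma>') \<eta>"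
    if "sym_rack_2cocycle op \<rho> A \<phi> \<psi> \<eta> \<sigma>'" "cohomologous_2cocycles op \<rho> A \<phi> \<psi> \<eta> \<sigma> \<sigma>'" for \<sigma>'
    using that by (intro cohomologous_dyn_if_cohomologous_2cocycles) (auto simp: sym_rack_2cocycle_def)
  show ?thesis
    using dynamical_cocycle_iff_module_and_2cocycle
      dynamical_cocycle_quandle_iff_module_and_2cocycle[OF idempotent] cohomologous
    unfolding sym_quandle_2cocycle_def by blast
qed

end
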